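(* Let $m\geq 3$ and $n\in \mathbb{N}=\{1,2,\dots\}$. Then \[ p'_{m}(n)=\sum_{k=1}^\infty (-1)^{k+1} \big(p'_{m}(n- P_{m+2,k})+p'_m(n-Q_{m+2,k})\big), \] where $P_{m+2,k}=\frac{k(mk-(m-2))}{2}$ and $Q_{m+2,k}=\frac{k(mk+(m-2))}{2}$.
   Context: For an integer $m\ge 3$, $p'_m(n)$ is the number of partitions of $n$ in which every part is congruent to $0$, $1$ or $m-1$ modulo $m$; equivalently $\sum_{n\ge0}p'_m(n)q^n=\frac{1}{(q;q^m)_\infty(q^{m-1};q^m)_\infty(q^m;q^m)_\infty}$, where $(a;q)_\infty=\prod_{k\ge0}(1-aq^k)$. By convention $p'_m(0)=1$ and $p'_m(x)=0$ for $x\notin\mathbb{N}_0$. (For $m=3$, $p'_3=p$ is the ordinary partition function.) *)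

theory Defs
  imports Complex_Main "HOL-Library.Multiset"
begin

definition restricted_partitions :: "nat \<Rightarrow> nat \<Rightarrow> nat multiset set" where
  "restricted_partitions m n =
     {P. (\<forall>x\<in>#P. 0 < x \<and> (x mod m = 0 \<or> x mod m = 1 \<or> x mod m = m - 1)) \<and> sum_mset P = n}"

definition pm :: "nat \<Rightarrow> int \<Rightarrow> nat" where
  "pm m x = (if x < 0 then 0 else card (restricted_partitions m (nat x)))"

definition Pgen :: "nat \<Rightarrow> nat \<Rightarrow> int" where
  "Pgen m k = (int k * (int m * int k - (int m - 2))) div 2"

definition Qgen :: "nat \<Rightarrow> nat \<Rightarrow> int" where
  "Qgen m k = (int k * (int m * int k + (int m - 2))) div 2"

end

theory Submission
  imports Defs "HOL-Computational_Algebra.Formal_Power_Series"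
begin

text \<open>
  Rothe's q-binomial theorem with Q = X^m and x = X^(mN - 1) yields a finite Jacobi triple
  product: (X; X^m)_N (X^(m-1); X^m)_N is a signed sum of the Gaussian binomials [2N, N +- i]_Q
  times X^(P_i) resp. X^(Q_i). Since [a + b, a]_Q (Q; Q)_a (Q; Q)_b = (Q; Q)_(a+b) and (Q; Q)_c
  does not change modulo X^(n+1) once c >= n, every Gaussian binomial whose monomial has degree
  at most n becomes 1 modulo X^(n+1) after multiplication by (Q; Q)_n, provided N >= 2n.
  The whole product is the reciprocal of the generating function of partitions into parts from
  a finite set containing all parts <= n that are congruent to 0 or +-1 mod m, so comparing
  coefficients of X^n gives the recurrence, whose terms vanish for k >= n.
\<close>

unbundle fps_syntax

lemma choose_two_add: "(a + b) choose 2 = (a choose 2) + (b choose 2) + a * b"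
  by (induction b) (auto simp: numeral_2_eq_2 algebra_simps)

lemma choose_two_double: "2 * (k choose 2) + k = k * k"
  by (induction k) (auto simp: numeral_2_eq_2 algebra_simps)

fun qbinomial :: "'a::comm_ring_1 \<Rightarrow> nat \<Rightarrow> nat \<Rightarrow> 'a" where
  "qbinomial Q 0 k = (if k = 0 then 1 else 0)"
| "qbinomial Q (Suc n) 0 = 1"
| "qbinomial Q (Suc n) (Suc k) = Q ^ Suc k * qbinomial Q n (Suc k) + qbinomial Q n k"

lemma qbinomial_eq_0: "n < k \<Longrightarrow> qbinomial Q n k = 0"
  by (induction Q n k rule: qbinomial.induct) auto

lemma qbinomial_0_right [simp]: "qbinomial Q n 0 = 1"
  by (cases n) auto

lemma qbinomial_self [simp]: "qbinomial Q n n = 1"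
  by (induction n) (auto simp: qbinomial_eq_0)

theorem q_binomial_theorem:
  fixes x u Q :: "'a::comm_ring_1"
  shows "(\<Prod>j<n. x - u * Q ^ j) =
           (\<Sum>k\<le>n. (-1) ^ k * qbinomial Q n k * Q ^ (k choose 2) * u ^ k * x ^ (n - k))"
proof (induction n arbitrary: u)
  case 0
  then show ?case by (simp add: binomial_eq_0)
next
  case (Suc n)
  define T where "T n u k = (-1) ^ k * qbinomial Q n k * Q ^ (k choose 2) * u ^ k * x ^ (n - k)"
    for n u k
  have step: "T (Suc n) u (Suc k) = x * T n (u * Q) (Suc k) - u * T n (u * Q) k" for k
  proof -
    have Q_pow: "Q ^ (Suc k choose 2) = Q ^ (k choose 2) * Q ^ k"
      by (simp add: numeral_2_eq_2 power_add)
    consider "k < n" | "k = n" | "n < k" by linarith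
    then show ?thesis
    proof cases
      case 1
      then have "x ^ (n - k) = x * x ^ (n - Suc k)"
        by (metis Suc_diff_Suc power_Suc)
      then show ?thesis
        by (simp add: T_def Q_pow algebra_simps)
    next
      case 2
      with Q_pow show ?thesis
        by (simp add: T_def qbinomial_eq_0 algebra_simps)
    qed (simp add: T_def qbinomial_eq_0)
  qed
  have T_0: "T n v 0 = x ^ n" for n v
    by (simp add: T_def binomial_eq_0)
  have T_Suc_self: "T n v (Suc n) = 0" for n v
    by (simp add: T_def qbinomial_eq_0)
  have "(\<Sum>k\<le>Suc n. T (Suc n) u k) = x ^ Suc n + (\<Sum>k\<le>n. x * T n (u * Q) (Suc k) - u * T n (u * Q) k)"
    by (simp only: sum.atMost_Suc_shift step T_0)
  also have "\<dots> = x * (T n (u * Q) 0 + (\<Sum>k\<le>n. T n (u * Q) (Suc k))) - u * (\<Sum>k\<le>n. T n (u * Q) k)"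
    by (simp add: T_0 sum_subtractf sum_distrib_left algebra_simps)
  also have "T n (u * Q) 0 + (\<Sum>k\<le>n. T n (u * Q) (Suc k)) = (\<Sum>k\<le>n. T n (u * Q) k)"
    by (simp only: sum.atMost_Suc_shift [symmetric] sum.atMost_Suc T_Suc_self add_0_right)
  also have "(\<Sum>k\<le>n. T n (u * Q) k) = (\<Prod>j<n. x - u * Q ^ Suc j)"
    using Suc.IH[of "u * Q"] by (simp add: T_def mult.assoc)
  finally show ?case
    by (simp add: T_def prod.lessThan_Suc_shift algebra_simps del: prod.lessThan_Suc)
qed

definition qpochhammer :: "'a::comm_ring_1 \<Rightarrow> nat \<Rightarrow> 'a" where
  "qpochhammer Q n = (\<Prod>j<n. 1 - Q ^ Suc j)"

lemma qpochhammer_Suc: "qpochhammer Q (Suc n) = qpochhammer Q n * (1 - Q ^ Suc n)"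
  by (simp add: qpochhammer_def)

lemma qbinomial_mult_qpochhammer:
  "k \<le> n \<Longrightarrow> qbinomial Q n k * qpochhammer Q k * qpochhammer Q (n - k) = qpochhammer Q n"
proof (induction n arbitrary: k)
  case 0
  then show ?case by (simp add: qpochhammer_def)
next
  case (Suc n)
  show ?case
  proof (cases k)
    case 0
    then show ?thesis by (simp add: qpochhammer_def)
  next
    case (Suc j)
    show ?thesis
    proof (cases "j = n")
      case True
      with Suc show ?thesis by (simp add: qpochhammer_def)
    next
      case False
      with Suc Suc.prems have "j < n" by simp
      then have n_minus_j: "n - j = Suc (n - Suc j)" by simp
      let ?P = "qpochhammer Q"
      have "qbinomial Q (Suc n) k * ?P k * ?P (Suc n - k) =
            Q ^ Suc j * (qbinomial Q n (Suc j) * ?P (Suc j) * ?P (n - Suc j)) * (1 - Q ^ (n - j))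
            + (qbinomial Q n j * ?P j * ?P (n - j)) * (1 - Q ^ Suc j)"
        by (simp add: Suc n_minus_j qpochhammer_Suc algebra_simps)
      also have "\<dots> = ?P n * (Q ^ Suc j * (1 - Q ^ (n - j)) + (1 - Q ^ Suc j))"
        using Suc.IH[of "Suc j"] Suc.IH[of j] \<open>j < n\<close> by (simp add: algebra_simps)
      also have "Q ^ Suc j * (1 - Q ^ (n - j)) + (1 - Q ^ Suc j) = 1 - Q ^ Suc n"
        using \<open>j < n\<close> by (simp add: algebra_simps flip: power_add)
      finally show ?thesis by (simp add: qpochhammer_Suc)
    qed
  qed
qed

text \<open>Congruence modulo X^n is expressed as equality of \<open>fps_cutoff n\<close>.\<close>

lemma fps_cutoff_mult_right_cong:
  fixes f g h :: "'a::comm_semiring_0 fps"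
  assumes "fps_cutoff n f = fps_cutoff n g"
  shows "fps_cutoff n (f * h) = fps_cutoff n (g * h)"
  unfolding fps_cutoff_eq_fps_cutoff_iff
proof (intro allI impI)
  fix k assume "k < n"
  then have "(f * h) $ k = (fps_cutoff n f * h) $ k" and "(g * h) $ k = (fps_cutoff n g * h) $ k"
    by (simp_all add: fps_cutoff_left_mult_nth)
  with assms show "(f * h) $ k = (g * h) $ k"
    by simp
qed

lemma fps_cutoff_mult_left_cong:
  fixes f g h :: "'a::comm_semiring_0 fps"
  assumes "fps_cutoff n f = fps_cutoff n g"
  shows "fps_cutoff n (h * f) = fps_cutoff n (h * g)"
  using fps_cutoff_mult_right_cong[OF assms, of h] by (simp only: mult.commute[of h])

lemma fps_cutoff_mult_right_cancel:
  fixes f g h :: "'a::field fps"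
  assumes "h $ 0 \<noteq> 0" and "fps_cutoff n (f * h) = fps_cutoff n (g * h)"
  shows "fps_cutoff n f = fps_cutoff n g"
  using fps_cutoff_mult_right_cong[OF assms(2), of "inverse h"] inverse_mult_eq_1'[OF assms(1)]
  by (simp add: mult.assoc)

lemma fps_cutoff_X_power_mult:
  fixes f :: "'a::comm_semiring_1 fps"
  assumes "e < n \<Longrightarrow> fps_cutoff n f = 1"
  shows "fps_cutoff n (fps_X ^ e * f) = fps_cutoff n (fps_X ^ e)"
proof (cases "e < n")
  case True
  then have "fps_cutoff n f = fps_cutoff n 1"
    using assms by (simp add: fps_cutoff_one)
  from fps_cutoff_mult_left_cong[OF this, of "fps_X ^ e"] show ?thesis
    by simp
next
  case False
  then show ?thesis
    by (simp add: fps_cutoff_eq_fps_cutoff_iff fps_X_power_mult_nth)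
qed

lemma qpochhammer_X_power_nth_0:
  "m \<ge> 1 \<Longrightarrow> qpochhammer (fps_X ^ m :: 'a::comm_ring_1 fps) n $ 0 = 1"
  by (induction n) (simp_all add: qpochhammer_def flip: power_mult)

lemma fps_cutoff_qpochhammer_X_power:
  assumes "m \<ge> 1" and "n \<le> a"
  shows "fps_cutoff (Suc n) (qpochhammer (fps_X ^ m) a :: 'a::comm_ring_1 fps) =
           fps_cutoff (Suc n) (qpochhammer (fps_X ^ m) n)"
  using assms(2)
proof (induction a rule: dec_induct)
  case base
  then show ?case by simp
next
  case (step a)
  have "Suc a \<le> m * Suc a"
    using mult_le_mono1[OF assms(1), of "Suc a"] by simp
  with step.hyps(1) have "n < m * Suc a"
    by linarith
  then have "fps_cutoff (Suc n) (1 - fps_X ^ (m * Suc a)) = fps_cutoff (Suc n) (1 :: 'a fps)"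
    by (simp add: fps_cutoff_eq_fps_cutoff_iff)
  then have "fps_cutoff (Suc n) (qpochhammer (fps_X ^ m) a * (1 - fps_X ^ (m * Suc a))) =
             fps_cutoff (Suc n) (qpochhammer (fps_X ^ m) a * 1 :: 'a fps)"
    by (rule fps_cutoff_mult_left_cong)
  then have "fps_cutoff (Suc n) (qpochhammer (fps_X ^ m) (Suc a)) =
             fps_cutoff (Suc n) (qpochhammer (fps_X ^ m) a :: 'a fps)"
    by (simp only: qpochhammer_Suc power_mult mult_1_right)
  from this step.IH show ?case by (rule trans)
qed

lemma fps_cutoff_qbinomial_mult_qpochhammer:
  fixes m :: nat and Q :: "'a::field fps"
  defines "Q \<equiv> fps_X ^ m"
  assumes "m \<ge> 1" and "n \<le> a" and "n \<le> b"
  shows "fps_cutoff (Suc n) (qbinomial Q (a + b) a * qpochhammer Q n) = 1"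
proof -
  let ?P = "qpochhammer Q"
  have cut_P: "fps_cutoff (Suc n) (?P c) = fps_cutoff (Suc n) (?P n)" if "n \<le> c" for c
    unfolding Q_def using fps_cutoff_qpochhammer_X_power[OF assms(2) that] .
  have "fps_cutoff (Suc n) (qbinomial Q (a + b) a * ?P n * ?P n)
      = fps_cutoff (Suc n) (qbinomial Q (a + b) a * ?P n * ?P b)"
    using fps_cutoff_mult_left_cong[OF cut_P[OF assms(4)]] by (rule sym)
  also have "\<dots> = fps_cutoff (Suc n) (qbinomial Q (a + b) a * ?P a * ?P b)"
    using fps_cutoff_mult_right_cong[OF fps_cutoff_mult_left_cong[OF cut_P[OF assms(3)]]] by (rule sym)
  also have "\<dots> = fps_cutoff (Suc n) (1 * ?P n)"
    using qbinomial_mult_qpochhammer[of a "a + b" Q] cut_P[of "a + b"] assms(3) by simp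
  finally have cut_prod: "fps_cutoff (Suc n) (qbinomial Q (a + b) a * ?P n * ?P n) = fps_cutoff (Suc n) (1 * ?P n)" .
  have "?P n $ 0 = 1"
    unfolding Q_def by (rule qpochhammer_X_power_nth_0[OF assms(2)])
  then have "?P n $ 0 \<noteq> 0"
    by simp
  from this cut_prod have "fps_cutoff (Suc n) (qbinomial Q (a + b) a * ?P n) = fps_cutoff (Suc n) 1"
    by (rule fps_cutoff_mult_right_cancel)
  then show ?thesis by (simp add: fps_cutoff_one)
qed

definition partitions_with_parts :: "nat set \<Rightarrow> nat \<Rightarrow> nat multiset set" where
  "partitions_with_parts A n = {P. set_mset P \<subseteq> A \<and> sum_mset P = n}"

definition partition_gf :: "nat set \<Rightarrow> 'a::comm_ring_1 fps" where
  "partition_gf A = Abs_fps (\<lambda>n. of_nat (card (partitions_with_parts A n)))"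

lemma size_le_sum_mset: "0 \<notin># P \<Longrightarrow> size P \<le> sum_mset (P :: nat multiset)"
  by (induction P) (auto simp: Suc_le_eq)

lemma finite_partitions_with_parts:
  assumes "finite A" and "0 \<notin> A"
  shows "finite (partitions_with_parts A n)"
proof (rule finite_subset)
  show "partitions_with_parts A n \<subseteq> (\<Union>s\<le>n. multisets_of_size A s)"
  proof
    fix P assume "P \<in> partitions_with_parts A n"
    then have P: "set_mset P \<subseteq> A" "sum_mset P = n"
      by (simp_all add: partitions_with_parts_def)
    then have "size P \<le> n"
      using assms(2) size_le_sum_mset by blast
    with P show "P \<in> (\<Union>s\<le>n. multisets_of_size A s)"
      by (auto simp: multisets_of_size_def)
  qed
  show "finite (\<Union>s\<le>n. multisets_of_size A s)"
    using assms(1) by blast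
qed

lemma card_partitions_with_parts_insert:
  assumes "finite A" and "0 \<notin> insert a A" and "a \<notin> A"
  shows "card (partitions_with_parts (insert a A) n) =
           card (partitions_with_parts A n) +
           (if n < a then 0 else card (partitions_with_parts (insert a A) (n - a)))"
proof -
  let ?B = "insert a A"
  define R where "R = {P. set_mset P \<subseteq> ?B \<and> a + sum_mset P = n}"
  have split: "partitions_with_parts ?B n = partitions_with_parts A n \<union> add_mset a ` R"
  proof (intro equalityI subsetI)
    fix P assume P: "P \<in> partitions_with_parts ?B n"
    show "P \<in> partitions_with_parts A n \<union> add_mset a ` R"
    proof (cases "a \<in># P")
      case True
      then have "P = add_mset a (P - {#a#})" and "P - {#a#} \<in> R"
        using P by (auto simp: R_def partitions_with_parts_def sum_mset.remove dest: in_diffD)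
      then show ?thesis by blast
    qed (use P in \<open>auto simp: partitions_with_parts_def\<close>)
  qed (auto simp: R_def partitions_with_parts_def)
  have R: "R = (if n < a then {} else partitions_with_parts ?B (n - a))"
    by (auto simp: R_def partitions_with_parts_def)
  have fin: "finite (partitions_with_parts C t)" if "C \<subseteq> ?B" for C t
    using assms that by (intro finite_partitions_with_parts) (auto intro: finite_subset)
  have "card (add_mset a ` R) = card R"
    by (rule card_image) (auto intro: inj_onI)
  moreover have "card (partitions_with_parts ?B n) = card (partitions_with_parts A n) + card (add_mset a ` R)"
  proof -
    have "finite R"
      using fin[of ?B "n - a"] by (simp add: R)
    moreover have "partitions_with_parts A n \<inter> add_mset a ` R = {}"
      using assms(3) by (auto simp: partitions_with_parts_def)
    ultimately show ?thesis
      unfolding split using fin[of A n, OF subset_insertI] by (simp add: card_Un_disjoint)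
  qed
  moreover have "card R = (if n < a then 0 else card (partitions_with_parts ?B (n - a)))"
    by (simp add: R)
  ultimately show ?thesis
    by simp
qed

lemma prod_one_minus_X_power_mult_partition_gf:
  assumes "finite A" and "0 \<notin> A"
  shows "(\<Prod>a\<in>A. 1 - fps_X ^ a) * partition_gf A = (1 :: 'a::comm_ring_1 fps)"
  using assms
proof (induction A rule: finite_induct)
  case empty
  have "partitions_with_parts {} n = (if n = 0 then {{#}} else {})" for n
    by (auto simp: partitions_with_parts_def)
  then show ?case
    by (simp add: partition_gf_def fps_eq_iff)
next
  case (insert a A)
  have "(\<Prod>a\<in>insert a A. 1 - fps_X ^ a) * partition_gf (insert a A) =
      (\<Prod>a\<in>A. 1 - fps_X ^ a) * ((1 - fps_X ^ a) * (partition_gf (insert a A) :: 'a fps))"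
    using insert.hyps by (simp add: mult_ac)
  also have "(1 - fps_X ^ a) * partition_gf (insert a A) = (partition_gf A :: 'a fps)"
  proof (rule fps_ext)
    fix t
    show "((1 - fps_X ^ a) * partition_gf (insert a A)) $ t = (partition_gf A :: 'a fps) $ t"
      using card_partitions_with_parts_insert[of A a t] insert.hyps insert.prems
      by (simp add: partition_gf_def fps_X_power_mult_nth left_diff_distrib)
  qed
  finally show ?case
    using insert.IH insert.prems by simp
qed

definition polygonal :: "nat \<Rightarrow> nat \<Rightarrow> nat" where
  "polygonal m k = m * (k choose 2) + k"

definition second_polygonal :: "nat \<Rightarrow> nat \<Rightarrow> nat" where
  "second_polygonal m k = m * (k choose 2) + (m - 1) * k"

lemma Pgen_eq_polygonal: "Pgen m k = int (polygonal m k)"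
proof -
  have "int k * (int m * int k - (int m - 2)) = int m * (int k * int k - int k) + 2 * int k"
    by (simp add: algebra_simps)
  also have "int k * int k - int k = 2 * int (k choose 2)"
    using arg_cong[OF choose_two_double[of k], of int] by simp
  finally show ?thesis
    by (simp add: Pgen_def polygonal_def)
qed

lemma Qgen_eq_second_polygonal:
  assumes "m \<ge> 1"
  shows "Qgen m k = int (second_polygonal m k)"
proof -
  have "int k * (int m * int k + (int m - 2)) = int m * (int k * int k - int k) + 2 * ((int m - 1) * int k)"
    by (simp add: algebra_simps)
  also have "int k * int k - int k = 2 * int (k choose 2)"
    using arg_cong[OF choose_two_double[of k], of int] by simp
  finally show ?thesis
    using assms by (simp add: Qgen_def second_polygonal_def)
qed

lemma polygonal_ge: "k \<le> polygonal m k"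
  by (simp add: polygonal_def)

lemma second_polygonal_ge:
  assumes "m \<ge> 2"
  shows "k \<le> second_polygonal m k"
proof -
  have "1 \<le> m - 1"
    using assms by simp
  from mult_le_mono1[OF this, of k] have "k \<le> (m - 1) * k"
    by simp
  then show ?thesis
    unfolding second_polygonal_def by linarith
qed

definition jacobi_product_trunc :: "nat \<Rightarrow> nat \<Rightarrow> 'a::comm_ring_1 fps" where
  "jacobi_product_trunc m N = (\<Prod>i<N. (1 - fps_X ^ (m * i + 1)) * (1 - fps_X ^ (m * i + (m - 1))))"

lemma prod_lessThan_add: "(\<Prod>j<a + b. f j) = (\<Prod>j<a. f j) * (\<Prod>j<b. f (a + j))"
  for f :: "nat \<Rightarrow> 'a::comm_monoid_mult"
  by (induction b) (simp_all add: mult.assoc)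

lemma prod_neg_X_power: "(\<Prod>j<N. - (fps_X ^ (m * j))) = (-1) ^ N * (fps_X ^ (m * (N choose 2)) :: 'a::comm_ring_1 fps)"
  by (induction N) (simp_all add: binomial_eq_0 numeral_2_eq_2 power_add algebra_simps)

lemma prod_X_power_diff_eq_jacobi_product_trunc:
  fixes m N :: nat
  defines "c \<equiv> m * N - 1"
  assumes "m \<ge> 1" and "N \<ge> 1"
  shows "(\<Prod>j<2 * N. fps_X ^ c - fps_X ^ (m * j)) =
           (-1) ^ N * fps_X ^ (m * (N choose 2) + c * N) * (jacobi_product_trunc m N :: 'a::comm_ring_1 fps)"
proof -
  let ?X = "fps_X :: 'a fps"
  have low: "?X ^ c - ?X ^ (m * j) = - (?X ^ (m * j)) * (1 - ?X ^ (m * (N - Suc j) + (m - 1)))"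
    if "j < N" for j
  proof -
    have "m * N = m * (j + (N - Suc j) + 1)"
      using that by simp
    then have "c = m * j + (m * (N - Suc j) + (m - 1))"
      using assms(2) unfolding c_def distrib_left by linarith
    then have "?X ^ c = ?X ^ (m * j) * (?X ^ (m * (N - Suc j) + (m - 1)))"
      by (metis power_add)
    then show ?thesis
      by (simp add: right_diff_distrib)
  qed
  have high: "?X ^ c - ?X ^ (m * (N + i)) = ?X ^ c * (1 - ?X ^ (m * i + 1))" for i
  proof -
    have "m * (N + i) = c + (m * i + 1)"
      using assms(2,3) unfolding c_def by (simp add: algebra_simps)
    then have "?X ^ (m * (N + i)) = ?X ^ c * (?X ^ (m * i + 1))"
      by (metis power_add)
    then show ?thesis
      by (simp add: right_diff_distrib)
  qed
  have "(\<Prod>j<2 * N. ?X ^ c - ?X ^ (m * j)) =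
        (\<Prod>j<N. ?X ^ c - ?X ^ (m * j)) * (\<Prod>i<N. ?X ^ c - ?X ^ (m * (N + i)))"
    by (simp only: mult_2 prod_lessThan_add)
  also have "(\<Prod>j<N. ?X ^ c - ?X ^ (m * j)) =
        (\<Prod>j<N. - (?X ^ (m * j)) * (1 - ?X ^ (m * (N - Suc j) + (m - 1))))"
    by (rule prod.cong) (simp_all add: low)
  also have "\<dots> = (\<Prod>j<N. - (?X ^ (m * j))) * (\<Prod>j<N. 1 - ?X ^ (m * (N - Suc j) + (m - 1)))"
    by (rule prod.distrib)
  also have "(\<Prod>j<N. - (?X ^ (m * j))) = (-1) ^ N * ?X ^ (m * (N choose 2))"
    by (rule prod_neg_X_power)
  also have "(\<Prod>j<N. 1 - ?X ^ (m * (N - Suc j) + (m - 1))) = (\<Prod>i<N. 1 - ?X ^ (m * i + (m - 1)))"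
    by (rule prod.nat_diff_reindex)
  also have "(\<Prod>i<N. ?X ^ c - ?X ^ (m * (N + i))) = (\<Prod>i<N. ?X ^ c) * (\<Prod>i<N. 1 - ?X ^ (m * i + 1))"
    by (simp only: high prod.distrib)
  also have "(\<Prod>i<N. ?X ^ c) = ?X ^ (c * N)"
    by (simp add: power_mult)
  finally show ?thesis
    by (simp add: jacobi_product_trunc_def prod.distrib power_add mult_ac)
qed

lemma prod_X_power_diff_eq_sum:
  "(\<Prod>j<K. fps_X ^ c - fps_X ^ (m * j)) =
     (\<Sum>k\<le>K. (-1) ^ k * qbinomial (fps_X ^ m) K k * fps_X ^ (m * (k choose 2) + c * (K - k))
       :: 'a::comm_ring_1 fps)"
proof -
  have "(\<Prod>j<K. fps_X ^ c - fps_X ^ (m * j)) = (\<Prod>j<K. fps_X ^ c - 1 * (fps_X ^ m) ^ j :: 'a fps)"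
    by (simp only: mult_1 power_mult)
  also have "\<dots> = (\<Sum>k\<le>K. (-1) ^ k * qbinomial (fps_X ^ m) K k * (fps_X ^ m) ^ (k choose 2) * 1 ^ k *
                          (fps_X ^ c) ^ (K - k))"
    by (rule q_binomial_theorem)
  finally show ?thesis
    by (simp only: power_one mult_1_right power_add power_mult mult.assoc)
qed

lemma rothe_exponent_plus:
  assumes "m * N \<ge> 1" and "i \<le> N"
  shows "m * ((N + i) choose 2) + (m * N - 1) * (N - i) =
           m * (N choose 2) + (m * N - 1) * N + polygonal m i"
proof -
  define c where "c = m * N - 1"
  have "m * (N * i) = (c + 1) * i"
    using assms(1) unfolding c_def by (simp add: mult.assoc [symmetric])
  moreover have "c * N = c * (N - i) + c * i"
    using assms(2) by (simp add: diff_mult_distrib2)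
  ultimately show ?thesis
    unfolding c_def [symmetric] polygonal_def choose_two_add distrib_left add_mult_distrib
    by linarith
qed

lemma rothe_exponent_minus:
  assumes "m * N \<ge> 1" and "i \<le> N"
  shows "m * ((N - i) choose 2) + (m * N - 1) * (N + i) =
           m * (N choose 2) + (m * N - 1) * N + second_polygonal m i"
proof -
  define c where "c = m * N - 1"
  define r where "r = N - i"
  have N: "N = r + i"
    using assms(2) unfolding r_def by simp
  have "(c + 1) * i = m * (N * i)"
    using assms(1) unfolding c_def by (simp add: mult.assoc [symmetric])
  then have "c * i + i = m * (r * i) + m * (i * i)"
    unfolding N by (simp add: algebra_simps)
  moreover have "m * (i * i) = m * (2 * (i choose 2)) + m * i"
    using choose_two_double[of i] by (metis distrib_left)
  moreover have "(m - 1) * i + i = m * i"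
    using assms(1) by (cases m) simp_all
  moreover have "m * (N choose 2) = m * (r choose 2) + m * (i choose 2) + m * (r * i)"
    unfolding N choose_two_add distrib_left ..
  ultimately show ?thesis
    unfolding c_def [symmetric] r_def [symmetric] second_polygonal_def distrib_left add_mult_distrib
    by linarith
qed

lemma sum_atMost_double_split:
  fixes f :: "nat \<Rightarrow> 'a::comm_monoid_add"
  shows "(\<Sum>k\<le>2 * N. f k) = f N + (\<Sum>i=1..N. f (N + i) + f (N - i))"
proof -
  have "{..2 * N} = {..<N} \<union> {N..N + N}"
    by auto
  then have "(\<Sum>k\<le>2 * N. f k) = (\<Sum>k<N. f k) + (\<Sum>k=N..N + N. f k)"
    by (simp only:) (rule sum.union_disjoint, auto)
  also have "(\<Sum>k<N. f k) = (\<Sum>i=1..N. f (N - i))"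
    by (simp add: sum.atLeast1_atMost_eq sum.nat_diff_reindex)
  also have "(\<Sum>k=N..N + N. f k) = (\<Sum>i=0..N. f (i + N))"
    using sum.shift_bounds_cl_nat_ivl[of f 0 N N] by simp
  also have "\<dots> = f N + (\<Sum>i=1..N. f (N + i))"
    by (simp add: sum.atLeast_Suc_atMost add.commute)
  finally show ?thesis
    by (simp add: sum.distrib add_ac)
qed

lemma fps_X_power_mult_left_cancel:
  fixes f g :: "'a::comm_ring_1 fps"
  assumes "fps_X ^ n * f = fps_X ^ n * g"
  shows "f = g"
  using arg_cong[OF assms, of "fps_shift n"] by (simp only: mult.commute[of "fps_X ^ n"] fps_shift_times_fps_X_power')

theorem finite_jacobi_triple_product:
  fixes m N :: nat
  defines "Q \<equiv> fps_X ^ m :: 'a::comm_ring_1 fps"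
  assumes "m \<ge> 1" and "N \<ge> 1"
  shows "jacobi_product_trunc m N = qbinomial Q (2 * N) N +
           (\<Sum>i=1..N. (-1) ^ i * (qbinomial Q (2 * N) (N + i) * fps_X ^ polygonal m i +
                                   qbinomial Q (2 * N) (N - i) * fps_X ^ second_polygonal m i))"
    (is "_ = ?R")
proof -
  let ?X = "fps_X :: 'a fps"
  let ?c = "m * N - 1"
  let ?A = "m * (N choose 2) + ?c * N"
  \<comment> \<open>the terms of Rothe's sum; those with k = N, N + i, N - i share the factor (-1)^N X^A\<close>
  define T where "T k = (-1) ^ k * qbinomial Q (2 * N) k * ?X ^ (m * (k choose 2) + ?c * (2 * N - k))" for k
  have mN: "m * N \<ge> 1"
    using assms(2,3) by simp
  have T_upper: "T (N + i) = (-1) ^ N * (?X ^ ?A * ((-1) ^ i * (qbinomial Q (2 * N) (N + i) * ?X ^ polygonal m i)))"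
    if "i \<le> N" for i
  proof -
    have "m * ((N + i) choose 2) + ?c * (2 * N - (N + i)) = ?A + polygonal m i"
      using rothe_exponent_plus[OF mN that] by (simp add: mult_2)
    then show ?thesis
      unfolding T_def by (simp add: power_add mult_ac)
  qed
  have T_lower: "T (N - i) = (-1) ^ N * (?X ^ ?A * ((-1) ^ i * (qbinomial Q (2 * N) (N - i) * ?X ^ second_polygonal m i)))"
    if "i \<le> N" for i
  proof -
    have "m * ((N - i) choose 2) + ?c * (2 * N - (N - i)) = ?A + second_polygonal m i"
      using rothe_exponent_minus[OF mN that] that by (simp add: mult_2)
    moreover have "(-1) ^ (N - i) = ((-1) ^ (N + i) :: 'a fps)"
      using that by (simp add: neg_one_power_add_eq_neg_one_power_diff)
    ultimately show ?thesis
      unfolding T_def by (simp add: power_add mult_ac)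
  qed
  have T_mid: "T N = (-1) ^ N * (?X ^ ?A * qbinomial Q (2 * N) N)"
    unfolding T_def by (simp add: mult_2 mult_ac)
  have "(-1) ^ N * (?X ^ ?A * jacobi_product_trunc m N) = (\<Prod>j<2 * N. ?X ^ ?c - ?X ^ (m * j))"
    unfolding mult.assoc [symmetric]
    by (rule prod_X_power_diff_eq_jacobi_product_trunc [OF assms(2,3), symmetric])
  also have "\<dots> = (\<Sum>k\<le>2 * N. T k)"
    unfolding T_def Q_def by (rule prod_X_power_diff_eq_sum)
  also have "\<dots> = T N + (\<Sum>i=1..N. T (N + i) + T (N - i))"
    by (rule sum_atMost_double_split)
  also have "(\<Sum>i=1..N. T (N + i) + T (N - i)) =
      (\<Sum>i=1..N. (-1) ^ N * (?X ^ ?A * ((-1) ^ i * (qbinomial Q (2 * N) (N + i) * ?X ^ polygonal m i +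
                                                 qbinomial Q (2 * N) (N - i) * ?X ^ second_polygonal m i))))"
    by (rule sum.cong) (simp_all add: T_upper T_lower distrib_left)
  also have "T N + \<dots> = (-1) ^ N * (?X ^ ?A * ?R)"
    unfolding T_mid by (simp only: distrib_left sum_distrib_left)
  finally have "(-1) ^ N * (?X ^ ?A * jacobi_product_trunc m N) = (-1) ^ N * (?X ^ ?A * ?R)" .
  from arg_cong[OF this, of "\<lambda>z. (-1) ^ N * z"]
  have "?X ^ ?A * jacobi_product_trunc m N = ?X ^ ?A * ?R"
    by (simp only: left_minus_one_mult_self)
  then show ?thesis
    by (rule fps_X_power_mult_left_cancel)
qed

lemma fps_cutoff_sum: "fps_cutoff n (\<Sum>i\<in>S. f i) = (\<Sum>i\<in>S. fps_cutoff n (f i :: 'a::comm_monoid_add fps))"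
  by (induction S rule: infinite_finite_induct) (simp_all add: fps_cutoff_add)

lemma fps_cutoff_X_power_mult_qbinomial_qpochhammer:
  fixes m :: nat and Q :: "'a::field fps"
  defines "Q \<equiv> fps_X ^ m"
  assumes "m \<ge> 1" and "k \<le> K" and "e \<le> n \<Longrightarrow> n \<le> k \<and> n \<le> K - k"
  shows "fps_cutoff (Suc n) (fps_X ^ e * (qbinomial Q K k * qpochhammer Q n)) = fps_cutoff (Suc n) (fps_X ^ e)"
proof (rule fps_cutoff_X_power_mult)
  assume "e < Suc n"
  with assms(4) have "n \<le> k" and "n \<le> K - k"
    by simp_all
  from fps_cutoff_qbinomial_mult_qpochhammer [OF assms(2) this] assms(3)
  show "fps_cutoff (Suc n) (qbinomial Q K k * qpochhammer Q n) = 1"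
    unfolding Q_def by simp
qed

lemma fps_cutoff_jacobi_product_trunc_mult_qpochhammer:
  fixes m n N :: nat
  assumes "m \<ge> 2" and "N \<ge> 1" and "2 * n \<le> N"
  shows "fps_cutoff (Suc n) (jacobi_product_trunc m N * qpochhammer (fps_X ^ m) n) =
           fps_cutoff (Suc n)
             (1 + (\<Sum>i=1..N. (-1) ^ i * (fps_X ^ polygonal m i + fps_X ^ second_polygonal m i)) :: 'a::field fps)"
proof -
  let ?Q = "fps_X ^ m :: 'a fps"
  let ?C = "\<lambda>k. qbinomial ?Q (2 * N) k * qpochhammer ?Q n"
  let ?P = "\<lambda>i. fps_X ^ polygonal m i :: 'a fps"
  let ?P' = "\<lambda>i. fps_X ^ second_polygonal m i :: 'a fps"
  have m: "m \<ge> 1"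
    using assms(1) by simp
  have cut_C: "fps_cutoff (Suc n) (fps_X ^ e * ?C k) = fps_cutoff (Suc n) (fps_X ^ e)"
    if "k \<le> 2 * N" and "i \<le> e" and "k = N + i \<or> k = N - i" for e i k
    by (rule fps_cutoff_X_power_mult_qbinomial_qpochhammer [OF m \<open>k \<le> 2 * N\<close>])
       (use that assms(3) in auto)
  have summand: "fps_cutoff (Suc n) ((-1) ^ i * (?P i * ?C (N + i) + ?P' i * ?C (N - i))) =
      fps_cutoff (Suc n) ((-1) ^ i * (?P i + ?P' i))" if "i \<in> {1..N}" for i
  proof (rule fps_cutoff_mult_left_cong)
    have "fps_cutoff (Suc n) (?P i * ?C (N + i)) = fps_cutoff (Suc n) (?P i)"
      using that polygonal_ge[of i m] by (intro cut_C[of _ i]) auto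
    moreover have "fps_cutoff (Suc n) (?P' i * ?C (N - i)) = fps_cutoff (Suc n) (?P' i)"
      using that second_polygonal_ge[OF assms(1), of i] by (intro cut_C[of _ i]) auto
    ultimately show "fps_cutoff (Suc n) (?P i * ?C (N + i) + ?P' i * ?C (N - i)) =
        fps_cutoff (Suc n) (?P i + ?P' i)"
      by (simp only: fps_cutoff_add)
  qed
  have "jacobi_product_trunc m N * qpochhammer ?Q n = ?C N +
      (\<Sum>i=1..N. (-1) ^ i * (qbinomial ?Q (2 * N) (N + i) * ?P i +
          qbinomial ?Q (2 * N) (N - i) * ?P' i) * qpochhammer ?Q n)"
    unfolding finite_jacobi_triple_product [OF m assms(2)]
    by (simp only: distrib_right sum_distrib_right)
  also have "\<dots> = ?C N + (\<Sum>i=1..N. (-1) ^ i * (?P i * ?C (N + i) + ?P' i * ?C (N - i)))"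
    by (simp only: mult_ac distrib_left distrib_right)
  finally have expand: "jacobi_product_trunc m N * qpochhammer ?Q n = \<dots>" .
  have "fps_cutoff (Suc n) (?C N) = fps_cutoff (Suc n) 1"
    using cut_C[of N 0 0] by simp
  moreover have "(\<Sum>i=1..N. fps_cutoff (Suc n) ((-1) ^ i * (?P i * ?C (N + i) + ?P' i * ?C (N - i)))) =
      (\<Sum>i=1..N. fps_cutoff (Suc n) ((-1) ^ i * (?P i + ?P' i)))"
    using summand by (rule sum.cong [OF refl])
  ultimately show ?thesis
    unfolding expand by (simp only: fps_cutoff_add fps_cutoff_sum)
qed

lemma mult_plus_one_mod: "m \<ge> 2 \<Longrightarrow> (m * i + 1) mod m = 1"
  for m i :: nat
  using mod_mult_self2[of 1 m i] by (simp add: add.commute)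

lemma mult_plus_pred_mod: "m \<ge> 1 \<Longrightarrow> (m * i + (m - 1)) mod m = m - 1"
  for m i :: nat
  using mod_mult_self2[of "m - 1" m i] by (simp add: add.commute)

text \<open>The exponents a of the factors 1 - X^a of \<open>jacobi_product_trunc m N * (X^m; X^m)_n\<close>.\<close>

definition admissible_parts :: "nat \<Rightarrow> nat \<Rightarrow> nat \<Rightarrow> nat set" where
  "admissible_parts m N n =
     (\<lambda>i. m * i + 1) ` {..<N} \<union> (\<lambda>i. m * i + (m - 1)) ` {..<N} \<union> (\<lambda>j. m * Suc j) ` {..<n}"

lemma admissible_parts_residue:
  assumes "m \<ge> 3" and "x \<in> admissible_parts m N n"
  shows "0 < x \<and> (x mod m = 0 \<or> x mod m = 1 \<or> x mod m = m - 1)"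
  using assms(2) unfolding admissible_parts_def
proof (elim UnE imageE)
  fix i assume "x = m * i + 1"
  with mult_plus_one_mod[of m i] assms(1) show ?thesis
    by simp
next
  fix i assume "x = m * i + (m - 1)"
  with mult_plus_pred_mod[of m i] assms(1) show ?thesis
    by simp
next
  fix j assume "x = m * Suc j"
  with assms(1) show ?thesis
    by simp
qed

lemma mem_admissible_parts:
  assumes "m \<ge> 3" and "0 < x" and "x \<le> n" and "n \<le> N"
    and "x mod m = 0 \<or> x mod m = 1 \<or> x mod m = m - 1"
  shows "x \<in> admissible_parts m N n"
proof -
  define d where "d = x div m"
  have x: "x = m * d + x mod m"
    unfolding d_def by simp
  have "d < x"
    unfolding d_def using assms(1,2) by (intro div_less_dividend) simp_all
  from assms(5) show ?thesis
  proof (elim disjE)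
    assume "x mod m = 0"
    with x assms(2) obtain j where j: "d = Suc j"
      by (cases d) auto
    with x \<open>x mod m = 0\<close> have "x = m * Suc j"
      by simp
    moreover have "j < n"
      using j \<open>d < x\<close> assms(3) by simp
    ultimately have "x \<in> (\<lambda>j. m * Suc j) ` {..<n}"
      by blast
    then show ?thesis
      unfolding admissible_parts_def by blast
  next
    assume "x mod m = 1"
    with x have "x = m * d + 1"
      by simp
    moreover have "d < N"
      using \<open>d < x\<close> assms(3,4) by simp
    ultimately have "x \<in> (\<lambda>i. m * i + 1) ` {..<N}"
      by blast
    then show ?thesis
      unfolding admissible_parts_def by blast
  next
    assume "x mod m = m - 1"
    with x have "x = m * d + (m - 1)"
      by simp
    moreover have "d < N"
      using \<open>d < x\<close> assms(3,4) by simp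
    ultimately have "x \<in> (\<lambda>i. m * i + (m - 1)) ` {..<N}"
      by blast
    then show ?thesis
      unfolding admissible_parts_def by blast
  qed
qed

lemma partitions_with_admissible_parts:
  assumes "m \<ge> 3" and "t \<le> n" and "n \<le> N"
  shows "partitions_with_parts (admissible_parts m N n) t = restricted_partitions m t"
proof (intro equalityI subsetI)
  fix P assume P: "P \<in> partitions_with_parts (admissible_parts m N n) t"
  then have "x \<in> admissible_parts m N n" if "x \<in># P" for x
    using that by (auto simp: partitions_with_parts_def)
  then have "0 < x \<and> (x mod m = 0 \<or> x mod m = 1 \<or> x mod m = m - 1)" if "x \<in># P" for x
    using admissible_parts_residue[OF assms(1)] that by blast
  with P show "P \<in> restricted_partitions m t"
    by (simp add: partitions_with_parts_def restricted_partitions_def)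
next
  fix P assume P: "P \<in> restricted_partitions m t"
  have "x \<in> admissible_parts m N n" if "x \<in># P" for x
  proof -
    from P that have pos: "0 < x" and res: "x mod m = 0 \<or> x mod m = 1 \<or> x mod m = m - 1"
      by (simp_all add: restricted_partitions_def)
    from that obtain Q where "P = add_mset x Q"
      by (blast dest: multi_member_split)
    then have "x \<le> sum_mset P"
      by simp
    with P assms(2) have "x \<le> n"
      by (simp add: restricted_partitions_def)
    from mem_admissible_parts[OF assms(1) pos this assms(3) res] show ?thesis .
  qed
  with P show "P \<in> partitions_with_parts (admissible_parts m N n) t"
    by (simp add: partitions_with_parts_def restricted_partitions_def subset_iff)
qed

lemma finite_admissible_parts: "finite (admissible_parts m N n)"
  by (simp add: admissible_parts_def)

lemma zero_notin_admissible_parts: "m \<ge> 3 \<Longrightarrow> 0 \<notin> admissible_parts m N n"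
  using admissible_parts_residue by blast

lemma prod_admissible_parts:
  assumes "m \<ge> 3"
  shows "(\<Prod>a\<in>admissible_parts m N n. 1 - fps_X ^ a) =
           (jacobi_product_trunc m N * qpochhammer (fps_X ^ m) n :: 'a::comm_ring_1 fps)"
proof -
  let ?f = "\<lambda>a. 1 - fps_X ^ a :: 'a fps"
  define A1 where "A1 = (\<lambda>i. m * i + 1) ` {..<N}"
  define A2 where "A2 = (\<lambda>i. m * i + (m - 1)) ` {..<N}"
  define A3 where "A3 = (\<lambda>j. m * Suc j) ` {..<n}"
  have res1: "x mod m = 1" if "x \<in> A1" for x
    using that mult_plus_one_mod assms unfolding A1_def by auto
  have res2: "x mod m = m - 1" if "x \<in> A2" for x
    using that mult_plus_pred_mod assms unfolding A2_def by auto
  have res3: "x mod m = 0" if "x \<in> A3" for x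
    using that unfolding A3_def by auto
  have "A1 \<inter> A2 = {}"
    using res1 res2 assms by fastforce
  moreover have "(A1 \<union> A2) \<inter> A3 = {}"
    using res1 res2 res3 assms by fastforce
  ultimately have "(\<Prod>a\<in>admissible_parts m N n. ?f a) = prod ?f A1 * prod ?f A2 * prod ?f A3"
    unfolding admissible_parts_def A1_def [symmetric] A2_def [symmetric] A3_def [symmetric]
    by (simp add: prod.union_disjoint A1_def A2_def A3_def)
  also have "prod ?f A1 = (\<Prod>i<N. 1 - fps_X ^ (m * i + 1))"
    unfolding A1_def using assms by (subst prod.reindex) (auto simp: inj_on_def)
  also have "prod ?f A2 = (\<Prod>i<N. 1 - fps_X ^ (m * i + (m - 1)))"
  proof -
    have "inj_on (\<lambda>i. m * i + (m - 1)) {..<N}"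
    proof (rule inj_onI)
      fix x y assume "m * x + (m - 1) = m * y + (m - 1)"
      then have "m * x = m * y"
        by (simp only: add_right_cancel)
      with assms show "x = y"
        by simp
    qed
    then show ?thesis
      unfolding A2_def by (simp add: prod.reindex)
  qed
  also have "prod ?f A3 = (\<Prod>j<n. 1 - fps_X ^ (m * Suc j))"
    unfolding A3_def using assms by (subst prod.reindex) (auto simp: inj_on_def)
  also have "\<dots> = qpochhammer (fps_X ^ m) n"
    unfolding qpochhammer_def by (simp only: power_mult)
  finally show ?thesis
    by (simp add: jacobi_product_trunc_def prod.distrib)
qed

lemma fps_neg_one_power_mult_nth: "((-1) ^ i * f) $ n = (-1) ^ i * (f $ n :: 'a::comm_ring_1)"
  by (cases "even i") simp_all

lemma fps_X_power_mult_partition_gf_admissible_nth: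
  assumes "m \<ge> 3" and "t \<le> n" and "n \<le> N"
  shows "(fps_X ^ e * partition_gf (admissible_parts m N n)) $ t = (of_nat (pm m (int t - int e)) :: 'a::comm_ring_1)"
proof (cases "t < e")
  case True
  then show ?thesis
    by (simp add: fps_X_power_mult_nth pm_def)
next
  case False
  then have "nat (int t - int e) = t - e" and "t - e \<le> n"
    using assms(2) by simp_all
  with False show ?thesis
    using partitions_with_admissible_parts[OF assms(1) _ assms(3)]
    by (simp add: fps_X_power_mult_nth partition_gf_def pm_def)
qed

lemma pm_eq_alternating_sum:
  assumes "m \<ge> 3" and "n \<ge> 1"
  shows "real (pm m (int n)) = (\<Sum>i=1..2 * n. (-1) ^ (i + 1) *
           (real (pm m (int n - int (polygonal m i))) + real (pm m (int n - int (second_polygonal m i)))))"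
proof -
  define N where "N = 2 * n"
  define G where "G = (partition_gf (admissible_parts m N n) :: real fps)"
  define S where "S = 1 + (\<Sum>i=1..N. (-1) ^ i * (fps_X ^ polygonal m i + fps_X ^ second_polygonal m i) :: real fps)"
  have coeff: "(fps_X ^ e * G) $ n = real (pm m (int n - int e))" for e
    unfolding G_def N_def by (rule fps_X_power_mult_partition_gf_admissible_nth) (use assms in simp_all)
  have inverse: "jacobi_product_trunc m N * qpochhammer (fps_X ^ m) n * G = 1"
    unfolding G_def prod_admissible_parts [OF assms(1), symmetric]
    by (rule prod_one_minus_X_power_mult_partition_gf [OF finite_admissible_parts zero_notin_admissible_parts [OF assms(1)]])
  have "fps_cutoff (Suc n) (jacobi_product_trunc m N * qpochhammer (fps_X ^ m) n) = fps_cutoff (Suc n) S"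
    unfolding S_def N_def by (rule fps_cutoff_jacobi_product_trunc_mult_qpochhammer) (use assms in simp_all)
  from fps_cutoff_mult_right_cong [OF this, of G]
  have "fps_cutoff (Suc n) (S * G) = fps_cutoff (Suc n) 1"
    unfolding inverse by (rule sym)
  then have "(S * G) $ n = 0"
    using assms(2) unfolding fps_cutoff_eq_fps_cutoff_iff by simp
  moreover have "S * G = G + (\<Sum>i=1..N. (-1) ^ i * (fps_X ^ polygonal m i * G + fps_X ^ second_polygonal m i * G))"
    unfolding S_def by (simp add: distrib_right sum_distrib_right mult.assoc)
  ultimately have "0 = real (pm m (int n)) + (\<Sum>i=1..N. (-1) ^ i *
      (real (pm m (int n - int (polygonal m i))) + real (pm m (int n - int (second_polygonal m i)))))"
    using coeff[of 0] by (simp add: fps_sum_nth fps_neg_one_power_mult_nth coeff)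
  then show ?thesis
    unfolding N_def by (simp add: sum_negf [symmetric] eq_neg_iff_add_eq_0 [symmetric])
qed

theorem theorem2p6:
  fixes m n :: nat
  assumes "m \<ge> 3" and "n \<ge> 1"
  shows "(\<lambda>k. (-1::real) ^ (Suc k + 1) *
            (real (pm m (int n - Pgen m (Suc k))) + real (pm m (int n - Qgen m (Suc k)))))
           sums real (pm m (int n))"
proof -
  define f where "f k = (-1::real) ^ (Suc k + 1) *
    (real (pm m (int n - Pgen m (Suc k))) + real (pm m (int n - Qgen m (Suc k))))" for k
  have f_eq: "f k = (-1) ^ (Suc k + 1) * (real (pm m (int n - int (polygonal m (Suc k)))) +
      real (pm m (int n - int (second_polygonal m (Suc k)))))" for k
    using assms(1) by (simp add: f_def Pgen_eq_polygonal Qgen_eq_second_polygonal)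
  have "f k = 0" if "k \<notin> {..<2 * n}" for k
  proof -
    have "n < polygonal m (Suc k)" and "n < second_polygonal m (Suc k)"
      using that polygonal_ge[of "Suc k" m] second_polygonal_ge[of m "Suc k"] assms by simp_all
    then show ?thesis
      by (simp add: f_eq pm_def)
  qed
  then have "f sums (\<Sum>k<2 * n. f k)"
    by (rule sums_finite [OF finite_lessThan])
  also have "(\<Sum>k<2 * n. f k) = real (pm m (int n))"
    unfolding pm_eq_alternating_sum [OF assms] f_eq by (simp add: sum.atLeast1_atMost_eq)
  finally show ?thesis
    unfolding f_def .
qed

end
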